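(* Let $n \geq 1$ and $z \geq 2$ be integers, and let $\epsilon > 0$ be a constant. Let $\mathbf{f}_1^{(0)}, \dots, \mathbf{f}_n^{(0)}$ be arbitrary probability vectors in $\mathbb{R}^z$ (nonnegative entries summing to $1$). For $t \geq 1$ define recursively, for all $i, j \in \{1,\dots,n\}$, $$p_{i,j}^{(t)} = \frac{\alpha_i^{(t)}}{\epsilon + D\left(\mathbf{f}_i^{(t-1)}, \mathbf{f}_j^{(t-1)}\right)}, \qquad \mathbf{f}_i^{(t)} = \sum_{j=1}^n p_{i,j}^{(t)} \mathbf{f}_j^{(t-1)},$$ where $\alpha_i^{(t)} > 0$ is the normalizing constant chosen so that $\sum_{j=1}^n p_{i,j}^{(t)} = 1$, and $$D(\mathbf{u}, \mathbf{v}) = \sqrt{\frac{\sum_{k=1}^{z} (u_k - v_k)^2}{z}}$$ is the root-mean-square deviation. Then a consensus is reached: for every $i, j \in \{1, \dots, n\}$, $\mathbf{f}_i^{(t)} - \mathbf{f}_j^{(t)} \to 0$ as $t \to \infty$.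
   Context: The vectors $\mathbf{f}_i^{(t)}$ represent the (probabilistic) opinion of expert $i$ after $t$ revisions, over $z$ mutually exclusive outcomes; $\mathbf{f}_i^{(0)}$ is the originally reported opinion. Each revision replaces an expert's opinion by a convex combination (linear opinion pool) of all current opinions, with weights inversely related to the distance between opinions. *)

theory Defs
  imports "HOL-Analysis.Analysis"
begin

text \<open>Opinions are vectors over outcomes indexed by k < z, represented as nat => real.
  Experts are indexed by i < n.\<close>

definition rmsd :: "nat \<Rightarrow> (nat \<Rightarrow> real) \<Rightarrow> (nat \<Rightarrow> real) \<Rightarrow> real" where
  "rmsd z u v = sqrt ((\<Sum>k<z. (u k - v k)^2) / real z)"

definition prob_vector :: "nat \<Rightarrow> (nat \<Rightarrow> real) \<Rightarrow> bool" where
  "prob_vector z u \<longleftrightarrow> (\<forall>k<z. u k \<ge> 0) \<and> (\<Sum>k<z. u k) = 1"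

definition pool_alpha :: "nat \<Rightarrow> nat \<Rightarrow> real \<Rightarrow> (nat \<Rightarrow> nat \<Rightarrow> real) \<Rightarrow> nat \<Rightarrow> real" where
  "pool_alpha n z eps g i = inverse (\<Sum>j<n. inverse (eps + rmsd z (g i) (g j)))"

definition pool_weight :: "nat \<Rightarrow> nat \<Rightarrow> real \<Rightarrow> (nat \<Rightarrow> nat \<Rightarrow> real) \<Rightarrow> nat \<Rightarrow> nat \<Rightarrow> real" where
  "pool_weight n z eps g i j = pool_alpha n z eps g i / (eps + rmsd z (g i) (g j))"

fun opinion :: "nat \<Rightarrow> nat \<Rightarrow> real \<Rightarrow> (nat \<Rightarrow> nat \<Rightarrow> real) \<Rightarrow> nat \<Rightarrow> nat \<Rightarrow> nat \<Rightarrow> real" where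
  "opinion n z eps f0 0 = f0"
| "opinion n z eps f0 (Suc t) =
     (\<lambda>i k. \<Sum>j<n. pool_weight n z eps (opinion n z eps f0 t) i j * opinion n z eps f0 t j k)"

end

theory Submission
  imports Defs
begin

text \<open>All opinions stay in the probability simplex, so every distance D is at most 1 and every
  pooling weight is at least c = \<epsilon> / (n (\<epsilon> + 1)). A convex combination whose weights are all
  at least c shrinks the spread (maximum minus minimum) of each coordinate by the factor
  1 - n c = 1 / (1 + \<epsilon>); hence after t revisions all experts agree in every coordinate up to
  (1 + \<epsilon>)^-t.\<close>

lemma rmsd_nonneg: "0 \<le> rmsd z u v"
  unfolding rmsd_def by (simp add: sum_nonneg)

lemma rmsd_le_1:
  assumes "z > 0" "\<forall>k<z. 0 \<le> u k \<and> u k \<le> 1" "\<forall>k<z. 0 \<le> v k \<and> v k \<le> 1"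
  shows "rmsd z u v \<le> 1"
proof -
  have "(\<Sum>k<z. (u k - v k)^2) \<le> (\<Sum>k<z. 1)"
  proof (rule sum_mono)
    fix k assume "k \<in> {..<z}"
    then have "\<bar>u k - v k\<bar> \<le> 1" using assms by force
    then show "(u k - v k)^2 \<le> 1"
      by (metis abs_ge_zero abs_square_le_1 one_le_power power2_abs)
  qed
  then show ?thesis using assms(1) unfolding rmsd_def by simp
qed

lemma pool_weight_eq:
  "pool_weight n z eps g i j
     = inverse (eps + rmsd z (g i) (g j)) / (\<Sum>l<n. inverse (eps + rmsd z (g i) (g l)))"
  unfolding pool_weight_def pool_alpha_def by (simp add: divide_inverse mult.commute)

lemma pool_weight_nonneg:
  assumes "eps > 0"
  shows "0 \<le> pool_weight n z eps g i j"
  unfolding pool_weight_eq using assms rmsd_nonneg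
  by (intro divide_nonneg_nonneg sum_nonneg) (auto intro: add_pos_nonneg)

lemma sum_pool_weight:
  assumes "n \<ge> 1" "eps > 0"
  shows "(\<Sum>j<n. pool_weight n z eps g i j) = 1"
proof -
  have "(\<Sum>l<n. inverse (eps + rmsd z (g i) (g l))) > 0"
    using assms rmsd_nonneg by (intro sum_pos) (auto simp: add_pos_nonneg lessThan_empty_iff)
  then show ?thesis
    unfolding pool_weight_eq by (simp add: sum_divide_distrib[symmetric])
qed

lemma pool_weight_ge:
  assumes "eps > 0" "j < n" "\<forall>l<n. rmsd z (g i) (g l) \<le> 1"
  shows "eps / (real n * (eps + 1)) \<le> pool_weight n z eps g i j"
proof -
  define w where "w l = inverse (eps + rmsd z (g i) (g l))" for l
  have w_pos: "w l > 0" for l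
    using assms(1) rmsd_nonneg unfolding w_def by (simp add: add_pos_nonneg)
  have w_ge: "1 / (eps + 1) \<le> w l" if "l < n" for l
    using assms(1,3) that rmsd_nonneg unfolding w_def
    by (simp add: field_simps add_pos_nonneg)
  have w_le: "w l \<le> 1 / eps" for l
    using assms(1) rmsd_nonneg unfolding w_def by (simp add: field_simps add_pos_nonneg)
  have sum_pos: "(\<Sum>l<n. w l) > 0"
    using assms(2) w_pos by (intro sum_pos) auto
  have sum_le: "(\<Sum>l<n. w l) \<le> real n / eps"
    using sum_mono[of "{..<n}" w "\<lambda>_. 1 / eps"] w_le by simp
  have "eps / (real n * (eps + 1)) = (1 / (eps + 1)) / (real n / eps)"
    using assms(1,2) by (simp add: field_simps)
  also have "\<dots> \<le> w j / (\<Sum>l<n. w l)"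
    by (rule frac_le) (use w_ge[OF assms(2)] w_pos[of j] sum_le sum_pos assms(1) in auto)
  finally show ?thesis unfolding pool_weight_eq w_def .
qed

text \<open>The weight mass c assigned to every index is spent independently of the values; only
  the remaining mass 1 - n c is sensitive to where the values lie in [a, b].\<close>

lemma convex_combination_bounds:
  fixes p x :: "nat \<Rightarrow> real"
  assumes "(\<Sum>l<n. p l) = 1" "\<forall>l<n. c \<le> p l" "\<forall>l<n. a \<le> x l \<and> x l \<le> b"
  shows "c * (\<Sum>l<n. x l) + (1 - real n * c) * a \<le> (\<Sum>l<n. p l * x l)"
    and "(\<Sum>l<n. p l * x l) \<le> c * (\<Sum>l<n. x l) + (1 - real n * c) * b"
proof -
  have split: "(\<Sum>l<n. p l * x l) = c * (\<Sum>l<n. x l) + (\<Sum>l<n. (p l - c) * x l)"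
    by (simp add: algebra_simps sum.distrib sum_distrib_left sum_subtractf)
  have excess: "(\<Sum>l<n. (p l - c) * y) = (1 - real n * c) * y" for y
    using assms(1) by (simp add: sum_distrib_right[symmetric] sum_subtractf)
  have "(\<Sum>l<n. (p l - c) * a) \<le> (\<Sum>l<n. (p l - c) * x l)"
    by (rule sum_mono) (use assms in \<open>auto intro: mult_left_mono\<close>)
  then show "c * (\<Sum>l<n. x l) + (1 - real n * c) * a \<le> (\<Sum>l<n. p l * x l)"
    unfolding split excess by linarith
  have "(\<Sum>l<n. (p l - c) * x l) \<le> (\<Sum>l<n. (p l - c) * b)"
    by (rule sum_mono) (use assms in \<open>auto intro: mult_left_mono\<close>)
  then show "(\<Sum>l<n. p l * x l) \<le> c * (\<Sum>l<n. x l) + (1 - real n * c) * b"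
    unfolding split excess by linarith
qed

lemma prob_vector_le_1:
  assumes "prob_vector z u" "k < z"
  shows "0 \<le> u k \<and> u k \<le> 1"
proof -
  have "u k \<le> (\<Sum>l<z. u l)"
    by (rule member_le_sum) (use assms in \<open>auto simp: prob_vector_def\<close>)
  then show ?thesis using assms by (auto simp: prob_vector_def)
qed

lemma opinion_unit_interval:
  assumes "n \<ge> 1" "eps > 0" "\<forall>i<n. \<forall>k<z. 0 \<le> f0 i k \<and> f0 i k \<le> 1"
  shows "\<forall>i<n. \<forall>k<z. 0 \<le> opinion n z eps f0 t i k \<and> opinion n z eps f0 t i k \<le> 1"
proof (induction t)
  case 0
  then show ?case using assms(3) by simp
next
  case (Suc t)
  let ?g = "opinion n z eps f0 t"
  show ?case
  proof (intro allI impI)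
    fix i k assume "i < n" "k < z"
    note bounds = convex_combination_bounds[where c = 0 and a = 0 and b = 1,
        OF sum_pool_weight[OF assms(1,2)], of z ?g i "\<lambda>l. ?g l k"]
    show "0 \<le> opinion n z eps f0 (Suc t) i k \<and> opinion n z eps f0 (Suc t) i k \<le> 1"
      using bounds pool_weight_nonneg[OF assms(2)] Suc \<open>k < z\<close> by simp
  qed
qed

lemma opinion_spread:
  assumes "n \<ge> 1" "z > 0" "eps > 0" "\<forall>i<n. \<forall>k<z. 0 \<le> f0 i k \<and> f0 i k \<le> 1" "k < z"
  shows "\<exists>a. \<forall>i<n. a \<le> opinion n z eps f0 t i k
                  \<and> opinion n z eps f0 t i k \<le> a + (1 / (eps + 1)) ^ t"
proof (induction t)
  case 0
  then show ?case using assms(4,5) by (metis add_0 opinion.simps(1) power_0)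
next
  case (Suc t)
  let ?g = "opinion n z eps f0 t"
  define c where "c = eps / (real n * (eps + 1))"
  have "real n * c = eps / (eps + 1)"
    using assms(1) unfolding c_def by simp
  then have contraction: "1 - real n * c = 1 / (eps + 1)"
    using assms(3) by (simp add: field_simps)
  obtain a where a: "\<forall>l<n. a \<le> ?g l k \<and> ?g l k \<le> a + (1 / (eps + 1)) ^ t"
    using Suc by blast
  have close: "\<forall>l<n. rmsd z (?g i) (?g l) \<le> 1" if "i < n" for i
    using rmsd_le_1[OF assms(2)] opinion_unit_interval[OF assms(1,3,4)] that by blast
  define a' where "a' = c * (\<Sum>l<n. ?g l k) + a / (eps + 1)"
  have "a' \<le> opinion n z eps f0 (Suc t) i k
        \<and> opinion n z eps f0 (Suc t) i k \<le> a' + (1 / (eps + 1)) ^ Suc t" if "i < n" for i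
  proof -
    have "\<forall>l<n. c \<le> pool_weight n z eps ?g i l"
      using pool_weight_ge[OF assms(3) _ close[OF that]] unfolding c_def by blast
    note bounds = convex_combination_bounds[OF sum_pool_weight[OF assms(1,3)] this a]
    show ?thesis
      using bounds unfolding contraction a'_def by (simp add: algebra_simps)
  qed
  then show ?case by blast
qed

theorem theorem1:
  fixes n z :: nat and eps :: real and f0 :: "nat \<Rightarrow> nat \<Rightarrow> real"
  assumes "n \<ge> 1" and "z \<ge> 2" and "eps > 0"
    and "\<And>i. i < n \<Longrightarrow> prob_vector z (f0 i)"
  shows "\<forall>i<n. \<forall>j<n. \<forall>k<z.
           (\<lambda>t. opinion n z eps f0 t i k - opinion n z eps f0 t j k) \<longlonglongrightarrow> 0"
proof (intro allI impI)
  fix i j k assume "i < n" "j < n" "k < z"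
  have f0_unit: "\<forall>i<n. \<forall>k<z. 0 \<le> f0 i k \<and> f0 i k \<le> 1"
    using assms(4) prob_vector_le_1 by blast
  have "\<forall>t. norm (opinion n z eps f0 t i k - opinion n z eps f0 t j k) \<le> (1 / (eps + 1)) ^ t"
  proof
    fix t
    obtain a where "\<forall>l<n. a \<le> opinion n z eps f0 t l k
                          \<and> opinion n z eps f0 t l k \<le> a + (1 / (eps + 1)) ^ t"
      using opinion_spread[OF assms(1) _ assms(3) f0_unit \<open>k < z\<close>] assms(2) by auto
    then have "a \<le> opinion n z eps f0 t i k" "opinion n z eps f0 t i k \<le> a + (1 / (eps + 1)) ^ t"
      "a \<le> opinion n z eps f0 t j k" "opinion n z eps f0 t j k \<le> a + (1 / (eps + 1)) ^ t"
      using \<open>i < n\<close> \<open>j < n\<close> by blast+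
    then show "norm (opinion n z eps f0 t i k - opinion n z eps f0 t j k) \<le> (1 / (eps + 1)) ^ t"
      unfolding real_norm_def abs_le_iff by linarith
  qed
  moreover have "(\<lambda>t. (1 / (eps + 1)) ^ t) \<longlonglongrightarrow> 0"
    by (rule LIMSEQ_power_zero) (use assms(3) in simp)
  ultimately show "(\<lambda>t. opinion n z eps f0 t i k - opinion n z eps f0 t j k) \<longlonglongrightarrow> 0"
    by (rule Lim_null_comparison[OF always_eventually])
qed

end
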